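(* Let $\mathcal{C}$ be a category and $A$ an object of $\mathcal{C}$ with $D(A)<\infty$. Then $D(A)=SD(A)$.
   Context: In a category $\mathcal{C}$, $X\leqslant^d Y$ means there are morphisms $f:X\to Y$, $g:Y\to X$ with $g\circ f=\mathrm{id}_X$. $X<^s Y$ means $X\leqslant^d Y$ holds but $Y\leqslant^d X$ fails; $X<^p Y$ means $X\leqslant^d Y$ and $X\not\cong Y$. A chain (resp. $s$-chain) of length $k$ for $A$ is $X_k<^p\cdots<^p X_1\leqslant^d A$ (resp. $X_k<^s\cdots<^s X_1\leqslant^d A$); the depth $D(A)$ (resp. strong depth $SD(A)$) is the supremum of their lengths. *)

theory Defs
  imports Main "HOL-Library.Extended_Nat"
begin

text \<open>Hom X Y is the set of morphisms X -> Y, cmp X Y Z g f is the composite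
  g o f of f : X -> Y and g : Y -> Z, and ident X is the identity of X.\<close>

definition category ::
  "('o \<Rightarrow> 'o \<Rightarrow> 'm set) \<Rightarrow> ('o \<Rightarrow> 'o \<Rightarrow> 'o \<Rightarrow> 'm \<Rightarrow> 'm \<Rightarrow> 'm) \<Rightarrow> ('o \<Rightarrow> 'm) \<Rightarrow> bool" where
  "category Hom cmp ident \<longleftrightarrow>
     (\<forall>X. ident X \<in> Hom X X) \<and>
     (\<forall>X Y Z f g. f \<in> Hom X Y \<longrightarrow> g \<in> Hom Y Z \<longrightarrow> cmp X Y Z g f \<in> Hom X Z) \<and>
     (\<forall>X Y f. f \<in> Hom X Y \<longrightarrow> cmp X Y Y (ident Y) f = f \<and> cmp X X Y f (ident X) = f) \<and>
     (\<forall>W X Y Z f g h. f \<in> Hom W X \<longrightarrow> g \<in> Hom X Y \<longrightarrow> h \<in> Hom Y Z \<longrightarrow>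
        cmp W X Z h (cmp W X Y g f) = cmp W Y Z (cmp X Y Z h g) f)"

definition dleq where
  "dleq Hom cmp ident X Y \<longleftrightarrow>
     (\<exists>f g. f \<in> Hom X Y \<and> g \<in> Hom Y X \<and> cmp X Y X g f = ident X)"

definition iso_obj where
  "iso_obj Hom cmp ident X Y \<longleftrightarrow>
     (\<exists>f g. f \<in> Hom X Y \<and> g \<in> Hom Y X \<and> cmp X Y X g f = ident X \<and> cmp Y X Y f g = ident Y)"

definition sless where
  "sless Hom cmp ident X Y \<longleftrightarrow> dleq Hom cmp ident X Y \<and> \<not> dleq Hom cmp ident Y X"

definition pless where
  "pless Hom cmp ident X Y \<longleftrightarrow> dleq Hom cmp ident X Y \<and> \<not> iso_obj Hom cmp ident X Y"

definition chain_lengths where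
  "chain_lengths Hom cmp ident R A =
     {k::nat. k \<ge> 1 \<and> (\<exists>X :: nat \<Rightarrow> 'o. dleq Hom cmp ident (X 1) A \<and>
                 (\<forall>i. 1 \<le> i \<and> i < k \<longrightarrow> R (X (Suc i)) (X i)))}"

definition depth where
  "depth Hom cmp ident A =
     Sup (enat ` chain_lengths Hom cmp ident (pless Hom cmp ident) A)"

definition strong_depth where
  "strong_depth Hom cmp ident A =
     Sup (enat ` chain_lengths Hom cmp ident (sless Hom cmp ident) A)"

end

theory Submission
  imports Defs
begin

(* Every s-chain is a p-chain. Conversely, if some step X_(i+1) <p X_i of a p-chain is not
   strict, then also X_i <=d X_(i+1), hence X_i <p X_(i+1), and continuing the chain by
   alternating X_i and X_(i+1) gives p-chains of every length, i.e. infinite depth. So when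
   the depth is finite, p-chains and s-chains coincide. No category axiom is needed. *)

lemma sless_imp_pless: "sless Hom cmp ident X Y \<Longrightarrow> pless Hom cmp ident X Y"
  unfolding sless_def pless_def iso_obj_def dleq_def by blast

lemma iso_obj_sym: "iso_obj Hom cmp ident X Y \<Longrightarrow> iso_obj Hom cmp ident Y X"
  unfolding iso_obj_def by blast

lemma pless_if_dleq_and_pless_converse:
  assumes "dleq Hom cmp ident X Y" and "pless Hom cmp ident Y X"
  shows "pless Hom cmp ident X Y"
  using assms iso_obj_sym[of Hom cmp ident X Y] unfolding pless_def by blast

lemma chain_lengths_mono:
  assumes "\<And>x y. R x y \<Longrightarrow> S x y"
  shows "chain_lengths Hom cmp ident R A \<subseteq> chain_lengths Hom cmp ident S A"
  unfolding chain_lengths_def using assms by blast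

lemma chain_lengths_all_if_cycle:
  assumes X1: "dleq Hom cmp ident (X 1) A"
    and chain: "\<And>j. 1 \<le> j \<Longrightarrow> j < i \<Longrightarrow> pless Hom cmp ident (X (Suc j)) (X j)"
    and i: "1 \<le> i"
    and down: "pless Hom cmp ident (X (Suc i)) (X i)"
    and up: "pless Hom cmp ident (X i) (X (Suc i))"
    and n: "1 \<le> n"
  shows "n \<in> chain_lengths Hom cmp ident (pless Hom cmp ident) A"
proof -
  define Z where
    "Z j = (if j \<le> i then X j else if even (j - i) then X i else X (Suc i))" for j
  have "pless Hom cmp ident (Z (Suc j)) (Z j)" if "1 \<le> j" for j
  proof -
    consider "Suc j \<le> i" | "j = i" | "i < j" by linarith
    then show ?thesis
    proof cases
      case 1
      then show ?thesis using chain that by (simp add: Z_def)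
    next
      case 2
      then show ?thesis using down by (simp add: Z_def)
    next
      case 3
      then have "Suc j - i = Suc (j - i)" by simp
      with 3 show ?thesis using down up by (auto simp: Z_def)
    qed
  qed
  moreover have "Z 1 = X 1" using i by (simp add: Z_def)
  ultimately have "dleq Hom cmp ident (Z 1) A \<and>
      (\<forall>j. 1 \<le> j \<and> j < n \<longrightarrow> pless Hom cmp ident (Z (Suc j)) (Z j))"
    using X1 by auto
  then show ?thesis
    unfolding chain_lengths_def using n by blast
qed

lemma depth_infinite_if_all_chain_lengths:
  assumes "\<And>n. 1 \<le> n \<Longrightarrow> n \<in> chain_lengths Hom cmp ident (pless Hom cmp ident) A"
  shows "depth Hom cmp ident A = \<infinity>"
proof -
  have above: "enat (Suc m) \<le> depth Hom cmp ident A" for m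
    unfolding depth_def by (intro Sup_upper imageI assms) simp
  show ?thesis
  proof (rule ccontr)
    assume "depth Hom cmp ident A \<noteq> \<infinity>"
    then obtain m where "depth Hom cmp ident A = enat m" by auto
    with above[of m] show False by simp
  qed
qed

lemma pchain_lengths_subset_schain_lengths:
  assumes "depth Hom cmp ident A < \<infinity>"
  shows "chain_lengths Hom cmp ident (pless Hom cmp ident) A
           \<subseteq> chain_lengths Hom cmp ident (sless Hom cmp ident) A"
proof
  fix k assume "k \<in> chain_lengths Hom cmp ident (pless Hom cmp ident) A"
  then obtain X where k: "1 \<le> k" and X1: "dleq Hom cmp ident (X 1) A"
    and chain: "\<And>j. 1 \<le> j \<Longrightarrow> j < k \<Longrightarrow> pless Hom cmp ident (X (Suc j)) (X j)"
    unfolding chain_lengths_def by blast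
  have "sless Hom cmp ident (X (Suc i)) (X i)" if i: "1 \<le> i" "i < k" for i
  proof (rule ccontr)
    assume "\<not> sless Hom cmp ident (X (Suc i)) (X i)"
    with chain[OF i] have "dleq Hom cmp ident (X i) (X (Suc i))"
      unfolding sless_def pless_def by blast
    then have up: "pless Hom cmp ident (X i) (X (Suc i))"
      using chain[OF i] by (rule pless_if_dleq_and_pless_converse)
    have "n \<in> chain_lengths Hom cmp ident (pless Hom cmp ident) A" if "1 \<le> n" for n
      by (rule chain_lengths_all_if_cycle[OF X1 _ i(1) chain[OF i] up that]) (use i in \<open>simp add: chain\<close>)
    then have "depth Hom cmp ident A = \<infinity>"
      by (rule depth_infinite_if_all_chain_lengths)
    with assms show False by simp
  qed
  with k X1 show "k \<in> chain_lengths Hom cmp ident (sless Hom cmp ident) A"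
    unfolding chain_lengths_def by blast
qed

theorem corollary2p16:
  fixes Hom :: "'o \<Rightarrow> 'o \<Rightarrow> 'm set"
    and cmp :: "'o \<Rightarrow> 'o \<Rightarrow> 'o \<Rightarrow> 'm \<Rightarrow> 'm \<Rightarrow> 'm"
    and ident :: "'o \<Rightarrow> 'm"
    and A :: 'o
  assumes "category Hom cmp ident"
    and "depth Hom cmp ident A < \<infinity>"
  shows "depth Hom cmp ident A = strong_depth Hom cmp ident A"
proof -
  have "chain_lengths Hom cmp ident (sless Hom cmp ident) A
          \<subseteq> chain_lengths Hom cmp ident (pless Hom cmp ident) A"
    by (rule chain_lengths_mono) (rule sless_imp_pless)
  then have "chain_lengths Hom cmp ident (sless Hom cmp ident) A
          = chain_lengths Hom cmp ident (pless Hom cmp ident) A"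
    using pchain_lengths_subset_schain_lengths[OF assms(2)] by (rule subset_antisym)
  then show ?thesis unfolding depth_def strong_depth_def by simp
qed

end
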